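(* Let $m\ge1$, $\xi\ge1$ an integer, $K_1,\dots,K_m>0$, and $\rho\in[0,1]$. The finite-population foraging Markov chain on $\mathcal S=\{\mathbf{x}\in\mathbb{Z}_{\ge0}^m:\sum_ix_i=\xi\}$ has all transition probabilities $A(\mathbf{x}\mid\mathbf{x}')$ strictly positive, and consequently it has a unique stationary distribution $\pi$, which satisfies $\pi(\mathbf{x})>0$ for all $\mathbf{x}\in\mathcal S$.
   Context: Let $\phi_i(u)=\frac{K_i}{K_i+u}$. The state $\mathbf{U}_n=(U_{1,n},\dots,U_{m,n})\in\mathcal S$ records how many of the $\xi$ foragers fly to site $i$ at time $n$. Given $\mathbf{U}_n=\mathbf{x}$, the numbers of successful foragers $V_{i,n}$ are independent with $V_{i,n}\sim\mathrm{Binomial}(x_i,\phi_i(x_i/\xi))$; let $R_n=\sum_iV_{i,n}$. If $R_n=0$ set $q_i=1/m$; otherwise $q_i=\rho\,V_{i,n}/R_n+(1-\rho)/m$. Then $\mathbf{U}_{n+1}-\mathbf{V}_n\sim\mathrm{Multinomial}(\xi-R_n,\mathbf{q})$, i.e. successful foragers return to their site and the $\xi-R_n$ unsuccessful ones are redistributed independently according to $\mathbf q$. $A(\mathbf{x}\mid\mathbf{x}')=\mathbb P[\mathbf{U}_{n+1}=\mathbf{x}\mid\mathbf{U}_n=\mathbf{x}']$. *)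

theory Defs
  imports Complex_Main
begin

text \<open>Sites are indexed by 0..m-1. A configuration is a function nat => nat that
vanishes outside {..<m}.\<close>

definition phi :: "real \<Rightarrow> real \<Rightarrow> real" where
  "phi K u = K / (K + u)"

definition state_space :: "nat \<Rightarrow> nat \<Rightarrow> (nat \<Rightarrow> nat) set" where
  "state_space m \<xi> = {x. (\<forall>i. i \<ge> m \<longrightarrow> x i = 0) \<and> (\<Sum>i<m. x i) = \<xi>}"

definition binom_prob :: "nat \<Rightarrow> real \<Rightarrow> nat \<Rightarrow> real" where
  "binom_prob n p k = (if k \<le> n then real (n choose k) * p ^ k * (1 - p) ^ (n - k) else 0)"

definition multinom_prob :: "nat \<Rightarrow> nat \<Rightarrow> (nat \<Rightarrow> real) \<Rightarrow> (nat \<Rightarrow> nat) \<Rightarrow> real" where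
  "multinom_prob m n q y =
     (if (\<Sum>i<m. y i) = n
      then fact n / (\<Prod>i<m. fact (y i)) * (\<Prod>i<m. q i ^ y i) else 0)"

text \<open>Redistribution probabilities given the vector of successful foragers v.\<close>
definition redistr :: "nat \<Rightarrow> real \<Rightarrow> (nat \<Rightarrow> nat) \<Rightarrow> nat \<Rightarrow> real" where
  "redistr m \<rho> v i =
     (let R = (\<Sum>j<m. v j) in
      if R = 0 then 1 / real m else \<rho> * real (v i) / real R + (1 - \<rho>) / real m)"

definition success_set :: "nat \<Rightarrow> (nat \<Rightarrow> nat) \<Rightarrow> (nat \<Rightarrow> nat) set" where
  "success_set m x' = {v. (\<forall>i<m. v i \<le> x' i) \<and> (\<forall>i. i \<ge> m \<longrightarrow> v i = 0)}"

text \<open>Transition probability A(x | x') = P[U_{n+1} = x | U_n = x'].\<close>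
definition trans_prob ::
  "nat \<Rightarrow> nat \<Rightarrow> (nat \<Rightarrow> real) \<Rightarrow> real \<Rightarrow> (nat \<Rightarrow> nat) \<Rightarrow> (nat \<Rightarrow> nat) \<Rightarrow> real" where
  "trans_prob m \<xi> K \<rho> x x' =
     (\<Sum>v\<in>success_set m x'.
        (\<Prod>i<m. binom_prob (x' i) (phi (K i) (real (x' i) / real \<xi>)) (v i)) *
        (if (\<forall>i<m. v i \<le> x i)
         then multinom_prob m (\<xi> - (\<Sum>i<m. v i)) (redistr m \<rho> v) (\<lambda>i. x i - v i)
         else 0))"

definition stationary_dist ::
  "nat \<Rightarrow> nat \<Rightarrow> (nat \<Rightarrow> real) \<Rightarrow> real \<Rightarrow> ((nat \<Rightarrow> nat) \<Rightarrow> real) \<Rightarrow> bool" where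
  "stationary_dist m \<xi> K \<rho> \<pi> \<longleftrightarrow>
     (\<forall>x. x \<notin> state_space m \<xi> \<longrightarrow> \<pi> x = 0) \<and>
     (\<forall>x\<in>state_space m \<xi>. \<pi> x \<ge> 0) \<and>
     (\<Sum>x\<in>state_space m \<xi>. \<pi> x) = 1 \<and>
     (\<forall>x\<in>state_space m \<xi>. \<pi> x = (\<Sum>x'\<in>state_space m \<xi>. trans_prob m \<xi> K \<rho> x x' * \<pi> x'))"

end

theory Submission
  imports Defs "HOL-Library.FuncSet"
begin

text \<open>With probability \<open>\<Prod>\<^sub>i (1 - \<phi>\<^sub>i)\<^bsup>x'\<^sub>i\<^esup> > 0\<close> every forager fails; then \<open>R = 0\<close>, all \<open>\<xi>\<close>
foragers are redistributed uniformly, and every configuration \<open>x\<close> has positive multinomial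
probability. So all entries of the column-stochastic matrix \<open>A\<close> are positive. If \<open>\<delta>\<close> is the
smallest entry, Doeblin's argument shows that \<open>A\<close> contracts the \<open>\<ell>\<^sup>1\<close> norm of zero-sum vectors
by the factor \<open>1 - |S| \<delta> < 1\<close>. Hence the iterates of any distribution converge to a stationary
one, two stationary distributions coincide, and \<open>\<pi> = A \<pi> \<ge> \<delta> \<Sum>\<pi> = \<delta>\<close> pointwise.\<close>

section \<open>Positive column-stochastic matrices\<close>

locale positive_stochastic_matrix =
  fixes S :: "'a set" and A :: "'a \<Rightarrow> 'a \<Rightarrow> real"
  assumes finite_S: "finite S" and S_nonempty: "S \<noteq> {}"
    and entries_pos: "\<And>x x'. x \<in> S \<Longrightarrow> x' \<in> S \<Longrightarrow> A x x' > 0"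
    and column_sum: "\<And>x'. x' \<in> S \<Longrightarrow> (\<Sum>x\<in>S. A x x') = 1"
begin

definition stationary :: "('a \<Rightarrow> real) \<Rightarrow> bool" where
  "stationary \<mu> \<longleftrightarrow> (\<forall>x. x \<notin> S \<longrightarrow> \<mu> x = 0) \<and> (\<forall>x\<in>S. \<mu> x \<ge> 0) \<and>
     (\<Sum>x\<in>S. \<mu> x) = 1 \<and> (\<forall>x\<in>S. \<mu> x = (\<Sum>x'\<in>S. A x x' * \<mu> x'))"

definition step :: "('a \<Rightarrow> real) \<Rightarrow> 'a \<Rightarrow> real" where
  "step p x = (if x \<in> S then \<Sum>x'\<in>S. A x x' * p x' else 0)"

definition min_entry :: real where
  "min_entry = Min (case_prod A ` (S \<times> S))"

definition contraction_coeff :: real where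
  "contraction_coeff = 1 - real (card S) * min_entry"

lemma min_entry_pos: "min_entry > 0"
  unfolding min_entry_def using finite_S S_nonempty entries_pos by (subst Min_gr_iff) auto

lemma min_entry_le: "x \<in> S \<Longrightarrow> x' \<in> S \<Longrightarrow> min_entry \<le> A x x'"
  unfolding min_entry_def using finite_S by (intro Min_le) auto

lemma contraction_coeff_less_1: "contraction_coeff < 1"
  unfolding contraction_coeff_def using min_entry_pos finite_S S_nonempty
  by (simp add: card_gt_0_iff)

lemma contraction_coeff_nonneg: "0 \<le> contraction_coeff"
proof -
  obtain x' where x': "x' \<in> S" using S_nonempty by auto
  have "(\<Sum>x\<in>S. min_entry) \<le> (\<Sum>x\<in>S. A x x')"
    using min_entry_le x' by (intro sum_mono) auto
  then show ?thesis using column_sum x' unfolding contraction_coeff_def by simp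
qed

lemma abs_le_sum_abs:
  assumes "x \<in> S"
  shows "\<bar>w x\<bar> \<le> (\<Sum>x'\<in>S. \<bar>w x' :: real\<bar>)"
  by (rule member_le_sum[OF assms _ finite_S]) simp

lemma sum_step: "(\<Sum>x\<in>S. step p x) = (\<Sum>x'\<in>S. p x')"
proof -
  have "(\<Sum>x\<in>S. step p x) = (\<Sum>x\<in>S. \<Sum>x'\<in>S. A x x' * p x')"
    by (simp add: step_def)
  also have "\<dots> = (\<Sum>x'\<in>S. \<Sum>x\<in>S. A x x' * p x')"
    by (rule sum.swap)
  also have "\<dots> = (\<Sum>x'\<in>S. p x')"
    using column_sum by (simp flip: sum_distrib_right)
  finally show ?thesis .
qed

lemma step_nonneg:
  assumes "\<And>x'. x' \<in> S \<Longrightarrow> p x' \<ge> 0"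
  shows "step p x \<ge> 0"
proof -
  have "0 \<le> A x x' * p x'" if "x \<in> S" "x' \<in> S" for x'
    using entries_pos[OF that] assms[OF that(2)] by simp
  then show ?thesis
    by (simp add: step_def sum_nonneg)
qed

lemma step_diff: "step (\<lambda>x. p x - q x) x = step p x - step q x"
  by (simp add: step_def algebra_simps sum_subtractf)

lemma sum_iterates: "(\<Sum>x\<in>S. (step ^^ n) p x) = (\<Sum>x\<in>S. p x)"
  by (induction n) (simp_all add: sum_step)

lemma iterates_nonneg:
  assumes "\<And>x'. x' \<in> S \<Longrightarrow> p x' \<ge> 0" and "x \<in> S"
  shows "(step ^^ n) p x \<ge> 0"
  using assms by (induction n arbitrary: x) (simp_all add: step_nonneg)

text \<open>Doeblin's argument: each column of \<open>A\<close> is \<open>min_entry\<close> times the all-ones vector plus a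
nonnegative remainder of total mass \<open>contraction_coeff\<close>, and the all-ones part annihilates
vectors of zero sum.\<close>

lemma l1_step_le:
  assumes zero_sum: "(\<Sum>x'\<in>S. w x') = 0"
  shows "(\<Sum>x\<in>S. \<bar>step w x\<bar>) \<le> contraction_coeff * (\<Sum>x'\<in>S. \<bar>w x'\<bar>)"
proof -
  have "\<bar>step w x\<bar> \<le> (\<Sum>x'\<in>S. (A x x' - min_entry) * \<bar>w x'\<bar>)" if x: "x \<in> S" for x
  proof -
    have "step w x = (\<Sum>x'\<in>S. (A x x' - min_entry) * w x')"
      using x zero_sum by (simp add: step_def left_diff_distrib sum_subtractf flip: sum_distrib_left)
    also have "\<bar>\<dots>\<bar> \<le> (\<Sum>x'\<in>S. \<bar>(A x x' - min_entry) * w x'\<bar>)"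
      by (rule sum_abs)
    also have "\<dots> = (\<Sum>x'\<in>S. (A x x' - min_entry) * \<bar>w x'\<bar>)"
      using min_entry_le x by (intro sum.cong) (auto simp: abs_mult)
    finally show ?thesis .
  qed
  then have "(\<Sum>x\<in>S. \<bar>step w x\<bar>) \<le> (\<Sum>x\<in>S. \<Sum>x'\<in>S. (A x x' - min_entry) * \<bar>w x'\<bar>)"
    by (rule sum_mono)
  also have "\<dots> = (\<Sum>x'\<in>S. \<Sum>x\<in>S. (A x x' - min_entry) * \<bar>w x'\<bar>)"
    by (rule sum.swap)
  also have "\<dots> = (\<Sum>x'\<in>S. (\<Sum>x\<in>S. A x x' - min_entry) * \<bar>w x'\<bar>)"
    by (simp add: sum_distrib_right)
  also have "\<dots> = contraction_coeff * (\<Sum>x'\<in>S. \<bar>w x'\<bar>)"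
    using column_sum by (simp add: contraction_coeff_def sum_subtractf sum_distrib_left)
  finally show ?thesis .
qed

lemma stationary_pos:
  assumes "stationary \<mu>" and x: "x \<in> S"
  shows "\<mu> x > 0"
proof -
  have nonneg: "\<forall>x\<in>S. \<mu> x \<ge> 0" and total: "(\<Sum>x\<in>S. \<mu> x) = 1"
    and fixed: "\<mu> x = (\<Sum>x'\<in>S. A x x' * \<mu> x')"
    using assms unfolding stationary_def by blast+
  have "min_entry = (\<Sum>x'\<in>S. min_entry * \<mu> x')"
    using total by (simp add: sum_distrib_left[symmetric])
  also have "\<dots> \<le> \<mu> x"
    unfolding fixed using nonneg x min_entry_le by (intro sum_mono mult_right_mono) auto
  finally show ?thesis using min_entry_pos by linarith
qed

lemma stationary_unique:
  assumes \<mu>: "stationary \<mu>" and \<sigma>: "stationary \<sigma>"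
  shows "\<mu> = \<sigma>"
proof -
  define w where "w x = \<mu> x - \<sigma> x" for x
  have "(\<Sum>x\<in>S. \<mu> x) = 1" "(\<Sum>x\<in>S. \<sigma> x) = 1"
    using \<mu> \<sigma> unfolding stationary_def by blast+
  then have zero_sum: "(\<Sum>x\<in>S. w x) = 0"
    by (simp add: w_def sum_subtractf)
  have "step w x = w x" if "x \<in> S" for x
    using \<mu> \<sigma> that unfolding w_def step_diff by (simp add: stationary_def step_def)
  then have "(\<Sum>x\<in>S. \<bar>w x\<bar>) \<le> contraction_coeff * (\<Sum>x\<in>S. \<bar>w x\<bar>)"
    using l1_step_le[OF zero_sum] by (metis (no_types, lifting) sum.cong)
  then have "(\<Sum>x\<in>S. \<bar>w x\<bar>) = 0"
    using contraction_coeff_less_1 sum_nonneg[of S "\<lambda>x. \<bar>w x\<bar>"]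
    by (smt (verit) mult_le_cancel_right1)
  then have "\<forall>x\<in>S. w x = 0"
    using finite_S by (simp add: sum_nonneg_eq_0_iff)
  then show ?thesis
    using \<mu> \<sigma> unfolding stationary_def w_def by (metis eq_iff_diff_eq_0 ext)
qed

lemma l1_iterate_diff_le:
  "(\<Sum>x\<in>S. \<bar>(step ^^ Suc n) p x - (step ^^ n) p x\<bar>)
     \<le> contraction_coeff ^ n * (\<Sum>x\<in>S. \<bar>step p x - p x\<bar>)"
proof (induction n)
  case 0
  then show ?case by simp
next
  case (Suc n)
  define w where "w x = (step ^^ Suc n) p x - (step ^^ n) p x" for x
  have zero_sum: "(\<Sum>x\<in>S. w x) = 0"
    using sum_step[of "(step ^^ n) p"] by (simp add: w_def sum_subtractf)
  have "(\<Sum>x\<in>S. \<bar>(step ^^ Suc (Suc n)) p x - (step ^^ Suc n) p x\<bar>) = (\<Sum>x\<in>S. \<bar>step w x\<bar>)"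
    by (simp add: w_def[abs_def] step_diff)
  also have "\<dots> \<le> contraction_coeff * (\<Sum>x\<in>S. \<bar>w x\<bar>)"
    by (rule l1_step_le[OF zero_sum])
  also have "\<dots> \<le> contraction_coeff ^ Suc n * (\<Sum>x\<in>S. \<bar>step p x - p x\<bar>)"
    using mult_left_mono[OF Suc.IH contraction_coeff_nonneg] by (simp add: w_def)
  finally show ?case .
qed

lemma iterates_convergent:
  assumes x: "x \<in> S"
  shows "convergent (\<lambda>n. (step ^^ n) p x)"
proof -
  define d where "d n = (step ^^ Suc n) p x - (step ^^ n) p x" for n
  define D where "D = (\<Sum>x\<in>S. \<bar>step p x - p x\<bar>)"
  have "summable (\<lambda>n. contraction_coeff ^ n * D)"
    using contraction_coeff_nonneg contraction_coeff_less_1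
    by (intro summable_mult2 summable_geometric) simp
  moreover have "norm (d n) \<le> contraction_coeff ^ n * D" for n
  proof -
    have "\<bar>d n\<bar> \<le> (\<Sum>x\<in>S. \<bar>(step ^^ Suc n) p x - (step ^^ n) p x\<bar>)"
      unfolding d_def using x by (rule abs_le_sum_abs)
    then show ?thesis
      using l1_iterate_diff_le[of n p] unfolding D_def by simp
  qed
  ultimately have "summable d"
    by (rule summable_comparison_test')
  then have "convergent (\<lambda>n. p x + (\<Sum>k<n. d k))"
    by (simp add: summable_iff_convergent convergent_add_const_iff)
  moreover have "p x + (\<Sum>k<n. d k) = (step ^^ n) p x" for n
    unfolding d_def by (subst sum_lessThan_telescope) simp
  ultimately show ?thesis
    by simp
qed

lemma stationary_exists: "\<exists>\<mu>. stationary \<mu>"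
proof -
  define p0 where "p0 x = (if x \<in> S then 1 / real (card S) else 0)" for x
  define \<mu> where "\<mu> x = lim (\<lambda>n. (step ^^ n) p0 x)" for x
  have outside: "(step ^^ n) p0 x = 0" if "x \<notin> S" for n x
    using that by (cases n) (simp_all add: p0_def step_def)
  have lim: "(\<lambda>n. (step ^^ n) p0 x) \<longlonglongrightarrow> \<mu> x" for x
  proof (cases "x \<in> S")
    case True
    then show ?thesis
      using iterates_convergent[OF True] unfolding \<mu>_def by (simp add: convergent_LIMSEQ_iff)
  next
    case False
    then show ?thesis
      unfolding \<mu>_def by (simp add: outside)
  qed
  have total: "(\<Sum>x\<in>S. (step ^^ n) p0 x) = 1" for n
    using finite_S S_nonempty by (simp add: sum_iterates p0_def)
  have "stationary \<mu>"
    unfolding stationary_def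
  proof (intro conjI ballI allI impI)
    show "\<mu> x = 0" if "x \<notin> S" for x
      using lim[of x] that by (simp add: outside LIMSEQ_const_iff)
    show "\<mu> x \<ge> 0" if "x \<in> S" for x
      using iterates_nonneg[of p0, OF _ that] by (intro LIMSEQ_le_const[OF lim]) (auto simp: p0_def)
    show "(\<Sum>x\<in>S. \<mu> x) = 1"
      using tendsto_sum[of S "\<lambda>x n. (step ^^ n) p0 x", OF lim]
      by (simp add: total LIMSEQ_const_iff)
    show "\<mu> x = (\<Sum>x'\<in>S. A x x' * \<mu> x')" if x: "x \<in> S" for x
    proof (rule LIMSEQ_unique)
      show "(\<lambda>n. (step ^^ Suc n) p0 x) \<longlonglongrightarrow> \<mu> x"
        using lim by (rule LIMSEQ_Suc)
      show "(\<lambda>n. (step ^^ Suc n) p0 x) \<longlonglongrightarrow> (\<Sum>x'\<in>S. A x x' * \<mu> x')"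
        using x by (simp add: step_def) (intro tendsto_sum tendsto_mult_left lim)
    qed
  qed
  then show ?thesis by blast
qed

end


section \<open>Sums over configurations\<close>

lemma bij_betw_success_set_PiE:
  "bij_betw (\<lambda>v. restrict v {..<m}) (success_set m b) (\<Pi>\<^sub>E i\<in>{..<m}. {..b i})"
  by (rule bij_betw_byWitness[where f' = "\<lambda>g i. if i < m then g i else 0"])
     (auto simp: success_set_def fun_eq_iff PiE_def extensional_def not_less)

lemma finite_success_set: "finite (success_set m b)"
  using bij_betw_finite[OF bij_betw_success_set_PiE] by (simp add: finite_PiE)

lemma sum_prod_success_set:
  fixes f :: "nat \<Rightarrow> nat \<Rightarrow> 'a::comm_semiring_1"
  shows "(\<Sum>v\<in>success_set m b. \<Prod>i<m. f i (v i)) = (\<Prod>i<m. \<Sum>k\<le>b i. f i k)"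
proof -
  have "(\<Sum>v\<in>success_set m b. \<Prod>i<m. f i (v i))
      = (\<Sum>v\<in>success_set m b. \<Prod>i<m. f i (restrict v {..<m} i))"
    by simp
  also have "\<dots> = (\<Sum>g\<in>(\<Pi>\<^sub>E i\<in>{..<m}. {..b i}). \<Prod>i<m. f i (g i))"
    by (rule sum.reindex_bij_betw[OF bij_betw_success_set_PiE])
  also have "\<dots> = (\<Prod>i<m. \<Sum>k\<le>b i. f i k)"
    by (simp add: prod_sum_PiE)
  finally show ?thesis .
qed

lemma state_space_subset_success_set: "state_space m n \<subseteq> success_set m (\<lambda>_. n)"
proof
  fix x assume x: "x \<in> state_space m n"
  have "x i \<le> n" if "i < m" for i
    using x that member_le_sum[of i "{..<m}" x] by (simp add: state_space_def)
  then show "x \<in> success_set m (\<lambda>_. n)"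
    using x by (simp add: success_set_def state_space_def)
qed

lemma finite_state_space: "finite (state_space m n)"
  using finite_subset[OF state_space_subset_success_set finite_success_set] .

lemma sum_state_space_Suc:
  "(\<Sum>y\<in>state_space (Suc m) n. g y) = (\<Sum>k\<le>n. \<Sum>y\<in>state_space m (n - k). g (y(m := k)))"
proof -
  have split: "(y m, y(m := 0)) \<in> Sigma {..n} (\<lambda>k. state_space m (n - k))"
    if "y \<in> state_space (Suc m) n" for y
  proof -
    have "(\<Sum>i<m. (y(m := 0)) i) = (\<Sum>i<m. y i)"
      by (intro sum.cong) auto
    then show ?thesis
      using that by (auto simp: state_space_def)
  qed
  have join: "y(m := k) \<in> state_space (Suc m) n"
    if "k \<le> n" "y \<in> state_space m (n - k)" for k y
  proof -
    have "(\<Sum>i<m. (y(m := k)) i) = (\<Sum>i<m. y i)"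
      by (intro sum.cong) auto
    then show ?thesis
      using that by (auto simp: state_space_def)
  qed
  have "(\<Sum>y\<in>state_space (Suc m) n. g y) = (\<Sum>(k, y)\<in>Sigma {..n} (\<lambda>k. state_space m (n - k)). g (y(m := k)))"
    by (rule sum.reindex_bij_witness[where j = "\<lambda>y. (y m, y(m := 0))" and i = "\<lambda>(k, y). y(m := k)"])
       (use split join in \<open>auto simp: state_space_def\<close>)
  then show ?thesis
    by (simp add: sum.Sigma finite_state_space)
qed

lemma multinomial_theorem:
  fixes q :: "nat \<Rightarrow> 'a::field_char_0"
  shows "(\<Sum>y\<in>state_space m n. \<Prod>i<m. q i ^ y i / fact (y i)) = (\<Sum>i<m. q i) ^ n / fact n"
proof (induction m arbitrary: n)
  case 0
  have "state_space 0 n = (if n = 0 then {\<lambda>_. 0} else {})"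
    by (auto simp: state_space_def)
  then show ?case by simp
next
  case (Suc m)
  have "(\<Sum>y\<in>state_space (Suc m) n. \<Prod>i<Suc m. q i ^ y i / fact (y i))
      = (\<Sum>k\<le>n. q m ^ k / fact k * (\<Sum>y\<in>state_space m (n - k). \<Prod>i<m. q i ^ y i / fact (y i)))"
    unfolding sum_state_space_Suc
    by (auto simp: lessThan_Suc sum_distrib_left mult.commute intro!: sum.cong prod.cong)
  also have "\<dots> = (\<Sum>k\<le>n. of_nat (n choose k) * q m ^ k * (\<Sum>i<m. q i) ^ (n - k)) / fact n"
    by (simp add: Suc.IH sum_divide_distrib binomial_fact)
  also have "\<dots> = (\<Sum>i<Suc m. q i) ^ n / fact n"
    by (simp add: binomial_ring add.commute)
  finally show ?case .
qed

lemma sum_multinom_prob: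
  "(\<Sum>y\<in>state_space m n. multinom_prob m n q y) = (\<Sum>i<m. q i) ^ n"
proof -
  have "(\<Sum>y\<in>state_space m n. multinom_prob m n q y)
      = (\<Sum>y\<in>state_space m n. fact n * (\<Prod>i<m. q i ^ y i / fact (y i)))"
    by (intro sum.cong) (auto simp: multinom_prob_def state_space_def prod_dividef)
  then show ?thesis
    by (simp add: multinomial_theorem flip: sum_distrib_left)
qed

lemma sum_binom_prob: "(\<Sum>k\<le>n. binom_prob n p k) = 1"
proof -
  have "(p + (1 - p)) ^ n = (\<Sum>k\<le>n. real (n choose k) * p ^ k * (1 - p) ^ (n - k))"
    by (rule binomial_ring)
  then show ?thesis
    by (simp add: binom_prob_def)
qed

lemma sum_state_space_shift:
  assumes v: "\<And>i. i \<ge> m \<Longrightarrow> v i = 0" and le: "(\<Sum>i<m. v i) \<le> n"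
  shows "(\<Sum>x\<in>state_space m n. if \<forall>i<m. v i \<le> x i then g (\<lambda>i. x i - v i) else 0)
       = (\<Sum>y\<in>state_space m (n - (\<Sum>i<m. v i)). g y)"
proof -
  let ?R = "\<Sum>i<m. v i"
  have sub: "(\<lambda>i. x i - v i) \<in> state_space m (n - ?R)"
    if "x \<in> state_space m n" "\<forall>i<m. v i \<le> x i" for x
  proof -
    have "(\<Sum>i<m. x i - v i) = (\<Sum>i<m. x i) - ?R"
      using that(2) by (intro sum_subtractf_nat) auto
    then show ?thesis
      using that(1) by (auto simp: state_space_def)
  qed
  have add: "(\<lambda>i. y i + v i) \<in> state_space m n" if "y \<in> state_space m (n - ?R)" for y
    using that le v by (auto simp: state_space_def sum.distrib)
  have cancel: "x i - v i + v i = x i" if "\<forall>i<m. v i \<le> x i" for x i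
    using v that by (cases "i < m") auto
  have "(\<Sum>x\<in>state_space m n. if \<forall>i<m. v i \<le> x i then g (\<lambda>i. x i - v i) else 0)
      = (\<Sum>x\<in>{x\<in>state_space m n. \<forall>i<m. v i \<le> x i}. g (\<lambda>i. x i - v i))"
    by (simp add: sum.inter_filter finite_state_space)
  also have "\<dots> = (\<Sum>y\<in>state_space m (n - ?R). g y)"
    by (rule sum.reindex_bij_witness[where j = "\<lambda>x i. x i - v i" and i = "\<lambda>y i. y i + v i"])
       (use sub add cancel in \<open>auto simp: fun_eq_iff\<close>)
  finally show ?thesis .
qed

section \<open>The foraging chain\<close>

lemma phi_nonneg: "K > 0 \<Longrightarrow> u \<ge> 0 \<Longrightarrow> 0 \<le> phi K u"
  by (simp add: phi_def)

lemma phi_le_1: "K > 0 \<Longrightarrow> u \<ge> 0 \<Longrightarrow> phi K u \<le> 1"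
  by (simp add: phi_def)

lemma phi_less_1: "K > 0 \<Longrightarrow> u > 0 \<Longrightarrow> phi K u < 1"
  by (simp add: phi_def)

lemma redistr_nonneg: "0 \<le> \<rho> \<Longrightarrow> \<rho> \<le> 1 \<Longrightarrow> 0 \<le> redistr m \<rho> v i"
  by (auto simp: redistr_def Let_def intro!: add_nonneg_nonneg divide_nonneg_nonneg mult_nonneg_nonneg sum_nonneg)

lemma sum_redistr:
  assumes "m \<ge> 1"
  shows "(\<Sum>i<m. redistr m \<rho> v i) = 1"
proof (cases "(\<Sum>j<m. v j) = 0")
  case True
  then show ?thesis
    using assms by (simp add: redistr_def)
next
  case False
  define R where "R = real (\<Sum>j<m. v j)"
  have "(\<Sum>i<m. redistr m \<rho> v i) = (\<Sum>i<m. \<rho> / R * real (v i) + (1 - \<rho>) / real m)"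
    unfolding redistr_def Let_def if_not_P[OF False] R_def by simp
  also have "\<dots> = \<rho> / R * (\<Sum>i<m. real (v i)) + (1 - \<rho>)"
    using assms by (simp add: sum.distrib sum_distrib_left)
  also have "(\<Sum>i<m. real (v i)) = R"
    by (simp add: R_def)
  finally show ?thesis
    using False by (simp add: R_def del: of_nat_sum)
qed

definition success_prob ::
  "nat \<Rightarrow> nat \<Rightarrow> (nat \<Rightarrow> real) \<Rightarrow> (nat \<Rightarrow> nat) \<Rightarrow> (nat \<Rightarrow> nat) \<Rightarrow> real" where
  "success_prob m \<xi> K x' v = (\<Prod>i<m. binom_prob (x' i) (phi (K i) (real (x' i) / real \<xi>)) (v i))"

definition redistribution_prob ::
  "nat \<Rightarrow> nat \<Rightarrow> real \<Rightarrow> (nat \<Rightarrow> nat) \<Rightarrow> (nat \<Rightarrow> nat) \<Rightarrow> real" where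
  "redistribution_prob m \<xi> \<rho> v x =
     (if \<forall>i<m. v i \<le> x i
      then multinom_prob m (\<xi> - (\<Sum>i<m. v i)) (redistr m \<rho> v) (\<lambda>i. x i - v i) else 0)"

lemma trans_prob_eq:
  "trans_prob m \<xi> K \<rho> x x' =
     (\<Sum>v\<in>success_set m x'. success_prob m \<xi> K x' v * redistribution_prob m \<xi> \<rho> v x)"
  by (simp add: trans_prob_def success_prob_def redistribution_prob_def)

lemma sum_success_prob: "(\<Sum>v\<in>success_set m x'. success_prob m \<xi> K x' v) = 1"
  unfolding success_prob_def
  by (simp add: sum_binom_prob
      sum_prod_success_set[where f = "\<lambda>i. binom_prob (x' i) (phi (K i) (real (x' i) / real \<xi>))"])

lemma sum_redistribution_prob:
  assumes "m \<ge> 1" and x': "x' \<in> state_space m \<xi>" and v: "v \<in> success_set m x'"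
  shows "(\<Sum>x\<in>state_space m \<xi>. redistribution_prob m \<xi> \<rho> v x) = 1"
proof -
  have "(\<Sum>i<m. v i) \<le> (\<Sum>i<m. x' i)"
    using v by (intro sum_mono) (simp add: success_set_def)
  then have "(\<Sum>i<m. v i) \<le> \<xi>"
    using x' by (simp add: state_space_def)
  then show ?thesis
    using v assms(1) unfolding redistribution_prob_def
    by (simp add: sum_state_space_shift success_set_def sum_multinom_prob sum_redistr)
qed

lemma trans_prob_column_sum:
  assumes "m \<ge> 1" and x': "x' \<in> state_space m \<xi>"
  shows "(\<Sum>x\<in>state_space m \<xi>. trans_prob m \<xi> K \<rho> x x') = 1"
proof -
  have "(\<Sum>x\<in>state_space m \<xi>. trans_prob m \<xi> K \<rho> x x')
      = (\<Sum>v\<in>success_set m x'.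
           success_prob m \<xi> K x' v * (\<Sum>x\<in>state_space m \<xi>. redistribution_prob m \<xi> \<rho> v x))"
    unfolding trans_prob_eq by (subst sum.swap) (simp add: sum_distrib_left)
  also have "\<dots> = (\<Sum>v\<in>success_set m x'. success_prob m \<xi> K x' v)"
    using assms by (simp add: sum_redistribution_prob)
  finally show ?thesis
    by (simp add: sum_success_prob)
qed

lemma success_prob_nonneg:
  assumes "\<forall>i<m. K i > 0"
  shows "0 \<le> success_prob m \<xi> K x' v"
  using assms phi_nonneg phi_le_1 unfolding success_prob_def binom_prob_def
  by (auto intro!: prod_nonneg)

lemma redistribution_prob_nonneg:
  assumes "0 \<le> \<rho>" and "\<rho> \<le> 1"
  shows "0 \<le> redistribution_prob m \<xi> \<rho> v x"
  using redistr_nonneg[OF assms] unfolding redistribution_prob_def multinom_prob_def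
  by (auto intro!: mult_nonneg_nonneg divide_nonneg_pos prod_nonneg prod_pos)

lemma success_prob_all_fail_pos:
  assumes "\<forall>i<m. K i > 0" and "\<xi> \<ge> 1"
  shows "0 < success_prob m \<xi> K x' (\<lambda>_. 0)"
  unfolding success_prob_def
proof (rule prod_pos)
  fix i assume i: "i \<in> {..<m}"
  show "0 < binom_prob (x' i) (phi (K i) (real (x' i) / real \<xi>)) 0"
  proof (cases "x' i = 0")
    case False
    then have "phi (K i) (real (x' i) / real \<xi>) < 1"
      using assms i by (intro phi_less_1) auto
    then show ?thesis
      by (simp add: binom_prob_def)
  qed (simp add: binom_prob_def)
qed

lemma redistribution_prob_all_fail_pos:
  assumes "m \<ge> 1" and "x \<in> state_space m \<xi>"
  shows "0 < redistribution_prob m \<xi> \<rho> (\<lambda>_. 0) x"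
  using assms unfolding redistribution_prob_def multinom_prob_def redistr_def state_space_def
  by (auto intro!: mult_pos_pos divide_pos_pos prod_pos)

lemma trans_prob_pos:
  assumes "m \<ge> 1" and "\<xi> \<ge> 1" and "\<forall>i<m. K i > 0" and "0 \<le> \<rho>" and "\<rho> \<le> 1"
    and "x \<in> state_space m \<xi>"
  shows "0 < trans_prob m \<xi> K \<rho> x x'"
  unfolding trans_prob_eq
proof (rule sum_pos2)
  show "finite (success_set m x')"
    by (rule finite_success_set)
  show "(\<lambda>_. 0) \<in> success_set m x'"
    by (simp add: success_set_def)
  show "0 < success_prob m \<xi> K x' (\<lambda>_. 0) * redistribution_prob m \<xi> \<rho> (\<lambda>_. 0) x"
    using assms by (simp add: success_prob_all_fail_pos redistribution_prob_all_fail_pos)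
  show "0 \<le> success_prob m \<xi> K x' v * redistribution_prob m \<xi> \<rho> v x" for v
    using assms by (simp add: success_prob_nonneg redistribution_prob_nonneg)
qed

theorem mainTheorem4:
  fixes m \<xi> :: nat and K :: "nat \<Rightarrow> real" and \<rho> :: real
  assumes "m \<ge> 1" and "\<xi> \<ge> 1"
    and "\<forall>i<m. K i > 0"
    and "0 \<le> \<rho>" and "\<rho> \<le> 1"
  shows "(\<forall>x\<in>state_space m \<xi>. \<forall>x'\<in>state_space m \<xi>. trans_prob m \<xi> K \<rho> x x' > 0)
    \<and> (\<exists>!\<pi>. stationary_dist m \<xi> K \<rho> \<pi>)
    \<and> (\<forall>\<pi>. stationary_dist m \<xi> K \<rho> \<pi> \<longrightarrow> (\<forall>x\<in>state_space m \<xi>. \<pi> x > 0))"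
proof -
  have pos: "\<forall>x\<in>state_space m \<xi>. \<forall>x'\<in>state_space m \<xi>. trans_prob m \<xi> K \<rho> x x' > 0"
    using trans_prob_pos[OF assms] by blast
  have "(\<lambda>i. if i = 0 then \<xi> else 0) \<in> state_space m \<xi>"
    using assms(1) by (simp add: state_space_def)
  then interpret positive_stochastic_matrix "state_space m \<xi>" "trans_prob m \<xi> K \<rho>"
    using pos trans_prob_column_sum[OF assms(1)] finite_state_space by unfold_locales auto
  have "stationary_dist m \<xi> K \<rho> = stationary"
    by (simp add: fun_eq_iff stationary_dist_def stationary_def)
  then show ?thesis
    using pos stationary_exists stationary_unique stationary_pos by auto
qed

end
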